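(* Let $\mathcal V$ be a finite state space and let $0 = t(0) < \dots$ be discrete diffusion times, with $s(i) < t(i)$ for $i=1,\dots,T$ denoting the pair of consecutive times used in the $i$-th reverse step. Let $p$ (source) and $q$ (target) be two discrete diffusion models on clean data $\mathbf x_0$ and latents $\mathbf z_t \in \mathcal V$ (or sequences thereof) that share the same Markov forward (noising) process, i.e. $p(\mathbf z_t \mid \mathbf x_0) = q(\mathbf z_t \mid \mathbf x_0)$ for all $t$ and the same forward transition kernels, and assume that the density ratio $q(\mathbf x_0)/p(\mathbf x_0)$ is well defined. Let the reverse target-domain model $q_{\psi^\star}(\mathbf z_{s(i)} \mid \mathbf z_{t(i)})$ be defined as a minimizer $$\psi^\star \in \arg\min_{\psi}\ \mathbb E_{q}\Big[\sum_{i=1}^{T} D_{\mathrm{KL}}\big(q(\mathbf z_{s(i)} \mid \mathbf z_{t(i)}, \mathbf x_0)\,\big\|\,q_\psi(\mathbf z_{s(i)} \mid \mathbf z_{t(i)})\big)\Big],$$ where $\mathbf x_0 \sim q$ and $\mathbf z_{t(i)} \sim q(\cdot \mid \mathbf x_0)$. Then $$q_{\psi^\star}(\mathbf z_{s(i)} \mid \mathbf z_{t(i)}) = \frac{p(\mathbf z_{s(i)} \mid \mathbf z_{t(i)})\ \mathbb E_{\mathbf x_0 \sim p(\cdot \mid \mathbf z_{s(i)})}\!\left[\frac{q(\mathbf x_0)}{p(\mathbf x_0)}\right]}{\sum_{\tilde{\mathbf z}_{s(i)}} p(\tilde{\mathbf z}_{s(i)} \mid \mathbf z_{t(i)})\ \mathbb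 E_{\mathbf x_0 \sim p(\cdot \mid \tilde{\mathbf z}_{s(i)})}\!\left[\frac{q(\mathbf x_0)}{p(\mathbf x_0)}\right]}.$$
   Context: $p(\mathbf z_{s}\mid \mathbf z_t)$ denotes the true reverse (backward) conditional of the source diffusion model (the distribution approximated by a source-trained denoiser), $p(\mathbf x_0 \mid \mathbf z_s)$ the source posterior of clean data given the latent at time $s$, and $q(\mathbf z_s \mid \mathbf z_t, \mathbf x_0)$ the true backward posterior of the target forward process. The minimization over $\psi$ is over conditional distributions $q_\psi(\cdot \mid \mathbf z_{t(i)})$ on the latent space (one for each step $i$ and each value of $\mathbf z_{t(i)}$). $D_{\mathrm{KL}}$ is the Kullback–Leibler divergence. *)

theory Defs
  imports "HOL-Probability.Probability_Mass_Function" "HOL-Library.Extended_Real"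
begin

definition KL :: "('v::finite \<Rightarrow> real) \<Rightarrow> 'v pmf \<Rightarrow> ereal" where
  "KL P Q = (\<Sum>z\<in>{z. P z > 0}.
      if pmf Q z = 0 then \<infinity> else ereal (P z * ln (P z / pmf Q z)))"

definition marg :: "'x::finite pmf \<Rightarrow> (real \<Rightarrow> 'x \<Rightarrow> 'v pmf) \<Rightarrow> real \<Rightarrow> 'v \<Rightarrow> real" where
  "marg r F a z = (\<Sum>x\<in>UNIV. pmf r x * pmf (F a x) z)"

text \<open>True backward posterior of the forward process: q(z_a | z_b, x0).\<close>
definition fwd_post :: "(real \<Rightarrow> 'x \<Rightarrow> 'v pmf) \<Rightarrow> (real \<Rightarrow> real \<Rightarrow> 'v \<Rightarrow> 'v pmf)
     \<Rightarrow> real \<Rightarrow> real \<Rightarrow> 'x \<Rightarrow> 'v \<Rightarrow> 'v \<Rightarrow> real" where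
  "fwd_post F K a b x zb za = pmf (F a x) za * pmf (K a b za) zb / pmf (F b x) zb"

text \<open>True reverse conditional of a model with clean-data law r: r(z_a | z_b).\<close>
definition rev_cond :: "'x::finite pmf \<Rightarrow> (real \<Rightarrow> 'x \<Rightarrow> 'v pmf) \<Rightarrow> (real \<Rightarrow> real \<Rightarrow> 'v \<Rightarrow> 'v pmf)
     \<Rightarrow> real \<Rightarrow> real \<Rightarrow> 'v \<Rightarrow> 'v \<Rightarrow> real" where
  "rev_cond r F K a b zb za = marg r F a za * pmf (K a b za) zb / marg r F b zb"

definition data_post :: "'x::finite pmf \<Rightarrow> (real \<Rightarrow> 'x \<Rightarrow> 'v pmf) \<Rightarrow> real \<Rightarrow> 'v \<Rightarrow> 'x \<Rightarrow> real" where
  "data_post r F a za x = pmf r x * pmf (F a x) za / marg r F a za"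

definition ratio_exp :: "'x::finite pmf \<Rightarrow> 'x pmf \<Rightarrow> (real \<Rightarrow> 'x \<Rightarrow> 'v pmf) \<Rightarrow> real \<Rightarrow> 'v \<Rightarrow> real" where
  "ratio_exp p q F a za = (\<Sum>x\<in>UNIV. data_post p F a za x * (pmf q x / pmf p x))"

definition objective :: "'x::finite pmf \<Rightarrow> (real \<Rightarrow> 'x \<Rightarrow> 'v::finite pmf) \<Rightarrow> (real \<Rightarrow> real \<Rightarrow> 'v \<Rightarrow> 'v pmf)
     \<Rightarrow> (nat \<Rightarrow> real) \<Rightarrow> (nat \<Rightarrow> real) \<Rightarrow> nat \<Rightarrow> (nat \<Rightarrow> 'v \<Rightarrow> 'v pmf) \<Rightarrow> ereal" where
  "objective q F K s t T \<psi> =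
     (\<Sum>x\<in>UNIV. \<Sum>i\<in>{1..T}. \<Sum>zt\<in>UNIV.
        ereal (pmf q x * pmf (F (t i) x) zt) * KL (fwd_post F K (s i) (t i) x zt) (\<psi> i zt))"

end

theory Submission
  imports Defs
begin

text \<open>Fix a step i and a latent z_t. As a function of the variable Q = q_psi(. | z_t), the objective is
  sum_x w(x) KL(P_x || Q) with weights w(x) = q(x) q(z_t | x) and P_x = q(. | z_t, x).
  By Gibbs' inequality such a weighted KL sum is uniquely minimised by the normalised mixture
  sum_x w(x) P_x / sum_x w(x), which is the target reverse conditional q(z_s | z_t).
  The objective is a sum of such terms in independent variables, so a minimiser must choose this
  mixture wherever q(z_t) > 0. Since both models share the forward kernel K, Bayes' rule gives
  q(z_s | z_t) proportional to q(z_s) K(z_t | z_s), and q(z_s) = p(z_s) E_{p(x_0 | z_s)}[q(x_0) / p(x_0)]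
  turns this into a reweighting of p(z_s | z_t).\<close>

section \<open>Discrete KL divergence and Gibbs' inequality\<close>

lemma KL_eq_sum:
  assumes "\<forall>z. P z \<ge> 0" and "\<forall>z. P z > 0 \<longrightarrow> pmf Q z > 0"
  shows "KL P Q = ereal (\<Sum>z\<in>UNIV. P z * ln (P z / pmf Q z))"
proof -
  have "KL P Q = (\<Sum>z\<in>{z. P z > 0}. ereal (P z * ln (P z / pmf Q z)))"
    unfolding KL_def using assms by (intro sum.cong) auto
  also have "\<dots> = ereal (\<Sum>z\<in>{z. P z > 0}. P z * ln (P z / pmf Q z))"
    by simp
  also have "(\<Sum>z\<in>{z. P z > 0}. P z * ln (P z / pmf Q z)) = (\<Sum>z\<in>UNIV. P z * ln (P z / pmf Q z))"
    using assms(1) by (intro sum.mono_neutral_left) (auto simp: order_le_less)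
  finally show ?thesis .
qed

lemma KL_eq_PInfty:
  assumes "P z > 0" and "pmf Q z = 0"
  shows "KL P Q = \<infinity>"
  unfolding KL_def using assms by (subst sum_Pinfty) auto

lemma mult_ln_div_ge_diff:
  fixes a b :: real
  assumes "0 \<le> a" and "0 \<le> b" and "0 < a \<Longrightarrow> 0 < b"
  shows "a - b \<le> a * ln (a / b)"
    and "a \<noteq> b \<Longrightarrow> a - b < a * ln (a / b)"
proof -
  have "a - b \<le> a * ln (a / b) \<and> (a \<noteq> b \<longrightarrow> a - b < a * ln (a / b))"
  proof (cases "a = 0")
    case False
    with assms have ab: "0 < a" "0 < b" by auto
    define c where "c = b / a - 1 - ln (b / a)"
    have gap: "a * ln (a / b) - (a - b) = a * c"
      using ab by (simp add: c_def ln_div field_simps)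
    have "0 \<le> c" using ab ln_le_minus_one[of "b / a"] by (simp add: c_def)
    moreover have "a \<noteq> b \<Longrightarrow> c \<noteq> 0"
      using ab ln_eq_minus_one[of "b / a"] by (auto simp: c_def)
    ultimately have "0 \<le> a * c" "a \<noteq> b \<Longrightarrow> 0 < a * c"
      using ab by simp_all
    with gap show ?thesis by auto
  qed (use assms in auto)
  then show "a - b \<le> a * ln (a / b)" and "a \<noteq> b \<Longrightarrow> a - b < a * ln (a / b)" by auto
qed

lemma relative_entropy_pos:
  fixes A B :: "'v::finite pmf"
  assumes "A \<noteq> B" and "\<forall>z. pmf A z > 0 \<longrightarrow> pmf B z > 0"
  shows "(\<Sum>z\<in>UNIV. pmf A z * ln (pmf A z / pmf B z)) > 0"
proof -
  obtain z0 where z0: "pmf A z0 \<noteq> pmf B z0" using assms(1) pmf_eqI by metis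
  have "(\<Sum>z\<in>UNIV. pmf A z - pmf B z) < (\<Sum>z\<in>UNIV. pmf A z * ln (pmf A z / pmf B z))"
  proof (rule sum_strict_mono_ex1)
    show "\<forall>z\<in>UNIV. pmf A z - pmf B z \<le> pmf A z * ln (pmf A z / pmf B z)"
      using assms(2) by (auto intro!: mult_ln_div_ge_diff(1))
    show "\<exists>z\<in>UNIV. pmf A z - pmf B z < pmf A z * ln (pmf A z / pmf B z)"
      using assms(2) z0 by (intro bexI[of _ z0] mult_ln_div_ge_diff(2)) auto
  qed simp
  moreover have "(\<Sum>z\<in>UNIV. pmf A z - pmf B z) = 0"
    by (simp add: sum_subtractf sum_pmf_eq_1)
  ultimately show ?thesis by simp
qed

section \<open>The mixture uniquely minimises a weighted KL sum\<close>

definition weighted_KL :: "('x::finite \<Rightarrow> real) \<Rightarrow> ('x \<Rightarrow> 'v::finite \<Rightarrow> real) \<Rightarrow> 'v pmf \<Rightarrow> ereal" where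
  "weighted_KL w P Q = (\<Sum>x\<in>UNIV. ereal (w x) * KL (P x) Q)"

text \<open>Only a distribution if sum w UNIV > 0 and P x is one whenever w x > 0; otherwise
  embed_pmf returns an unspecified pmf.\<close>

definition mixture :: "('x::finite \<Rightarrow> real) \<Rightarrow> ('x \<Rightarrow> 'v \<Rightarrow> real) \<Rightarrow> 'v pmf" where
  "mixture w P = embed_pmf (\<lambda>z. (\<Sum>x\<in>UNIV. w x * P x z) / sum w UNIV)"

lemma weighted_KL_eq_sum:
  assumes w0: "\<forall>x. 0 \<le> w x" and P0: "\<forall>x z. 0 \<le> P x z"
    and supp: "\<forall>x z. 0 < w x \<longrightarrow> 0 < P x z \<longrightarrow> 0 < pmf Q z"
  shows "weighted_KL w P Q = ereal (\<Sum>x\<in>UNIV. w x * (\<Sum>z\<in>UNIV. P x z * ln (P x z / pmf Q z)))"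
proof -
  have "ereal (w x) * KL (P x) Q = ereal (w x * (\<Sum>z\<in>UNIV. P x z * ln (P x z / pmf Q z)))" for x
  proof (cases "w x = 0")
    case False
    with w0 have "0 < w x" by (metis order_le_less)
    with P0 supp show ?thesis by (simp add: KL_eq_sum)
  qed (simp add: zero_ereal_def[symmetric])
  then show ?thesis unfolding weighted_KL_def by simp
qed

lemma weighted_KL_eq_PInfty:
  assumes "0 < w x" and "0 < P x z" and "pmf Q z = 0"
  shows "weighted_KL w P Q = \<infinity>"
  unfolding weighted_KL_def using assms KL_eq_PInfty[of "P x" z Q]
  by (subst sum_Pinfty) (auto intro!: bexI[of _ x])

lemma weighted_KL_zero_weights: "\<forall>x. w x = 0 \<Longrightarrow> weighted_KL w P Q = 0"
  unfolding weighted_KL_def by (simp add: zero_ereal_def[symmetric])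

context
  fixes w :: "'x::finite \<Rightarrow> real" and P :: "'x \<Rightarrow> 'v::finite \<Rightarrow> real"
  assumes w0: "\<forall>x. 0 \<le> w x" and P0: "\<forall>x z. 0 \<le> P x z"
    and P1: "\<forall>x. 0 < w x \<longrightarrow> sum (P x) UNIV = 1"
begin

lemma sum_weighted_sum_eq: "(\<Sum>z\<in>UNIV. \<Sum>x\<in>UNIV. w x * P x z) = sum w UNIV"
proof -
  have "(\<Sum>z\<in>UNIV. \<Sum>x\<in>UNIV. w x * P x z) = (\<Sum>x\<in>UNIV. w x * sum (P x) UNIV)"
    by (subst sum.swap) (simp add: sum_distrib_left)
  also have "\<dots> = sum w UNIV"
    using w0 P1 by (intro sum.cong) (auto simp: order_le_less)
  finally show ?thesis .
qed

lemma pmf_mixture: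
  assumes W: "0 < sum w UNIV"
  shows "pmf (mixture w P) z = (\<Sum>x\<in>UNIV. w x * P x z) / sum w UNIV"
proof -
  let ?f = "\<lambda>z. (\<Sum>x\<in>UNIV. w x * P x z) / sum w UNIV"
  have nonneg: "0 \<le> ?f z" for z
    using w0 P0 W by (auto intro!: divide_nonneg_pos sum_nonneg)
  have "sum ?f UNIV = 1"
    using sum_weighted_sum_eq W by (simp add: sum_divide_distrib[symmetric])
  then have "(\<integral>\<^sup>+z. ennreal (?f z) \<partial>count_space UNIV) = 1"
    using nonneg by (simp add: nn_integral_count_space_finite sum_ennreal)
  then show ?thesis
    unfolding mixture_def using nonneg pmf_embed_pmf[of ?f] by blast
qed

lemma pmf_mixture_pos:
  assumes "0 < w x" and "0 < P x z"
  shows "0 < pmf (mixture w P) z"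
proof -
  have W: "0 < sum w UNIV"
    using w0 \<open>0 < w x\<close> by (metis UNIV_I finite sum_pos2)
  have "0 < w x * P x z" using assms by simp
  also have "\<dots> \<le> (\<Sum>x\<in>UNIV. w x * P x z)"
    using w0 P0 by (intro member_le_sum) auto
  finally show ?thesis using W by (simp add: pmf_mixture[OF W])
qed

lemma weighted_KL_mixture_eq_sum:
  "weighted_KL w P (mixture w P)
    = ereal (\<Sum>x\<in>UNIV. w x * (\<Sum>z\<in>UNIV. P x z * ln (P x z / pmf (mixture w P) z)))"
  using w0 P0 pmf_mixture_pos by (intro weighted_KL_eq_sum) auto

lemma weighted_cross_entropy_gap:
  assumes W: "0 < sum w UNIV" and supp: "\<forall>z. 0 < pmf (mixture w P) z \<longrightarrow> 0 < pmf Q z"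
  shows "(\<Sum>x\<in>UNIV. w x * (\<Sum>z\<in>UNIV. P x z * ln (P x z / pmf Q z)))
       - (\<Sum>x\<in>UNIV. w x * (\<Sum>z\<in>UNIV. P x z * ln (P x z / pmf (mixture w P) z)))
     = sum w UNIV * (\<Sum>z\<in>UNIV. pmf (mixture w P) z * ln (pmf (mixture w P) z / pmf Q z))"
proof -
  let ?M = "mixture w P"
  have split_ln: "w x * (P x z * ln (P x z / pmf Q z)) - w x * (P x z * ln (P x z / pmf ?M z))
      = w x * P x z * ln (pmf ?M z / pmf Q z)" for x z
  proof (cases "w x * P x z = 0")
    case False
    with w0 P0 have pos: "0 < w x" "0 < P x z" by (metis mult_eq_0_iff order_le_less)+
    with pmf_mixture_pos supp have "0 < pmf ?M z" "0 < pmf Q z" by auto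
    with pos show ?thesis by (simp add: ln_div algebra_simps)
  qed auto
  have "(\<Sum>x\<in>UNIV. w x * (\<Sum>z\<in>UNIV. P x z * ln (P x z / pmf Q z)))
       - (\<Sum>x\<in>UNIV. w x * (\<Sum>z\<in>UNIV. P x z * ln (P x z / pmf ?M z)))
     = (\<Sum>x\<in>UNIV. \<Sum>z\<in>UNIV. w x * P x z * ln (pmf ?M z / pmf Q z))"
    by (simp only: sum_distrib_left sum_subtractf[symmetric] split_ln)
  also have "\<dots> = (\<Sum>z\<in>UNIV. (\<Sum>x\<in>UNIV. w x * P x z) * ln (pmf ?M z / pmf Q z))"
    by (subst sum.swap) (simp only: sum_distrib_right)
  also have "\<dots> = (\<Sum>z\<in>UNIV. sum w UNIV * pmf ?M z * ln (pmf ?M z / pmf Q z))"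
    using W by (simp add: pmf_mixture[OF W])
  also have "\<dots> = sum w UNIV * (\<Sum>z\<in>UNIV. pmf ?M z * ln (pmf ?M z / pmf Q z))"
    by (simp add: sum_distrib_left mult.assoc)
  finally show ?thesis .
qed

lemma weighted_KL_mixture_less:
  assumes W: "0 < sum w UNIV" and "Q \<noteq> mixture w P"
  shows "weighted_KL w P (mixture w P) < weighted_KL w P Q"
proof (cases "\<forall>z. 0 < pmf (mixture w P) z \<longrightarrow> 0 < pmf Q z")
  case True
  have "weighted_KL w P Q = ereal (\<Sum>x\<in>UNIV. w x * (\<Sum>z\<in>UNIV. P x z * ln (P x z / pmf Q z)))"
    using w0 P0 True pmf_mixture_pos by (intro weighted_KL_eq_sum) auto
  moreover have "0 < sum w UNIV * (\<Sum>z\<in>UNIV. pmf (mixture w P) z * ln (pmf (mixture w P) z / pmf Q z))"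
    using W True \<open>Q \<noteq> mixture w P\<close> by (intro mult_pos_pos relative_entropy_pos) auto
  ultimately show ?thesis
    using weighted_cross_entropy_gap[OF W True]
    by (simp add: weighted_KL_mixture_eq_sum)
next
  case False
  then obtain z where z: "0 < pmf (mixture w P) z" "pmf Q z = 0"
    by (metis order_le_less pmf_nonneg)
  then have "(\<Sum>x\<in>UNIV. w x * P x z) \<noteq> 0"
    using pmf_mixture[OF W] by auto
  then obtain x where "w x * P x z \<noteq> 0"
    by (meson UNIV_I sum.neutral)
  with w0 P0 have "0 < w x" "0 < P x z" by (metis mult_eq_0_iff order_le_less)+
  then have "weighted_KL w P Q = \<infinity>"
    using z by (intro weighted_KL_eq_PInfty)
  then show ?thesis by (simp add: weighted_KL_mixture_eq_sum)
qed

lemma weighted_KL_mixture_finite: "\<bar>weighted_KL w P (mixture w P)\<bar> \<noteq> \<infinity>"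
  by (simp add: weighted_KL_mixture_eq_sum)

lemma weighted_KL_mixture_le: "weighted_KL w P (mixture w P) \<le> weighted_KL w P Q"
proof (cases "0 < sum w UNIV")
  case True
  then show ?thesis
    using weighted_KL_mixture_less[OF True, of Q]
    by (cases "Q = mixture w P") (simp_all add: less_imp_le)
next
  case False
  moreover from w0 have "0 \<le> sum w UNIV" by (simp add: sum_nonneg)
  ultimately have "sum w UNIV = 0" by simp
  with w0 have "\<forall>x. w x = 0" by (simp add: sum_nonneg_eq_0_iff)
  then show ?thesis by (simp add: weighted_KL_zero_weights)
qed

end

section \<open>Bayes' rule for the shared forward process\<close>

context
  fixes F :: "real \<Rightarrow> 'x::finite \<Rightarrow> 'v::finite pmf" and K :: "real \<Rightarrow> real \<Rightarrow> 'v \<Rightarrow> 'v pmf"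
    and a b :: real
  assumes markov: "\<forall>x z'. pmf (F b x) z' = (\<Sum>z\<in>UNIV. pmf (F a x) z * pmf (K a b z) z')"
begin

lemma fwd_post_sum_eq_1:
  assumes "0 < pmf (F b x) zb"
  shows "(\<Sum>za\<in>UNIV. fwd_post F K a b x zb za) = 1"
  using markov assms unfolding fwd_post_def by (simp add: sum_divide_distrib[symmetric])

lemma pmf_mixture_fwd_post:
  assumes "0 < marg r F b zb"
  shows "pmf (mixture (\<lambda>x. pmf r x * pmf (F b x) zb) (\<lambda>x. fwd_post F K a b x zb)) za
    = (\<Sum>x\<in>UNIV. pmf r x * pmf (F b x) zb * fwd_post F K a b x zb za) / marg r F b zb"
proof -
  have "\<forall>x za. 0 \<le> fwd_post F K a b x zb za" by (simp add: fwd_post_def)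
  moreover have "\<forall>x. 0 < pmf r x * pmf (F b x) zb \<longrightarrow> (\<Sum>za\<in>UNIV. fwd_post F K a b x zb za) = 1"
    by (auto simp: zero_less_mult_iff intro: fwd_post_sum_eq_1)
  moreover have "0 < (\<Sum>x\<in>UNIV. pmf r x * pmf (F b x) zb)" using assms by (simp add: marg_def)
  ultimately show ?thesis by (simp add: pmf_mixture marg_def)
qed

lemma sum_weighted_fwd_post:
  "(\<Sum>x\<in>UNIV. pmf r x * pmf (F b x) zb * fwd_post F K a b x zb za)
     = pmf (K a b za) zb * marg r F a za"
  unfolding marg_def sum_distrib_left
proof (intro sum.cong refl)
  fix x
  show "pmf r x * pmf (F b x) zb * fwd_post F K a b x zb za
      = pmf (K a b za) zb * (pmf r x * pmf (F a x) za)"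
  proof (cases "pmf (F b x) zb = 0")
    case True
    have "pmf (F a x) za * pmf (K a b za) zb \<le> (\<Sum>z\<in>UNIV. pmf (F a x) z * pmf (K a b z) zb)"
      by (intro member_le_sum) auto
    with True markov have "pmf (F a x) za * pmf (K a b za) zb = 0"
      by (metis antisym mult_nonneg_nonneg pmf_nonneg)
    with True show ?thesis by (auto simp: fwd_post_def)
  qed (simp add: fwd_post_def)
qed

lemma marg_chapman_kolmogorov:
  "(\<Sum>za\<in>UNIV. pmf (K a b za) zb * marg r F a za) = marg r F b zb"
  unfolding marg_def sum_distrib_left
  by (subst sum.swap) (simp add: markov sum_distrib_left mult_ac)

end

context
  fixes p q :: "'x::finite pmf"
  assumes abs_cont: "\<forall>x. pmf q x > 0 \<longrightarrow> pmf p x > 0"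
begin

lemma marg_pos_of_abs_cont:
  assumes "0 < marg q F a z"
  shows "0 < marg p F a z"
proof -
  from assms have "marg q F a z \<noteq> 0" by simp
  then obtain x where "pmf q x * pmf (F a x) z \<noteq> 0"
    unfolding marg_def by (meson UNIV_I sum.neutral)
  then have "0 < pmf p x * pmf (F a x) z"
    using abs_cont by (simp add: order_less_le)
  also have "\<dots> \<le> marg p F a z"
    unfolding marg_def by (intro member_le_sum) auto
  finally show ?thesis .
qed

lemma marg_mult_ratio_exp: "marg p F a z * ratio_exp p q F a z = marg q F a z"
proof (cases "marg p F a z = 0")
  case True
  then have "\<not> 0 < marg q F a z" using marg_pos_of_abs_cont[of F a z] by auto
  then have "marg q F a z = 0" by (simp add: marg_def sum_nonneg order.strict_iff_order)
  with True show ?thesis by simp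
next
  case False
  have "marg p F a z * ratio_exp p q F a z
      = (\<Sum>x\<in>UNIV. marg p F a z * (data_post p F a z x * (pmf q x / pmf p x)))"
    by (simp add: ratio_exp_def sum_distrib_left)
  also have "\<dots> = (\<Sum>x\<in>UNIV. pmf q x * pmf (F a x) z)"
  proof (intro sum.cong refl)
    fix x
    show "marg p F a z * (data_post p F a z x * (pmf q x / pmf p x)) = pmf q x * pmf (F a x) z"
      using False abs_cont[rule_format, of x] pmf_nonneg[of q x] unfolding data_post_def
      by (cases "pmf p x = 0") (auto simp: order_le_less)
  qed
  also have "\<dots> = marg q F a z" by (simp add: marg_def)
  finally show ?thesis .
qed

end

lemma mixture_fwd_post_eq_reweighted_rev_cond:
  fixes p q :: "'x::finite pmf" and F :: "real \<Rightarrow> 'x \<Rightarrow> 'v::finite pmf"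
  assumes markov: "\<forall>x z'. pmf (F b x) z' = (\<Sum>z\<in>UNIV. pmf (F a x) z * pmf (K a b z) z')"
    and abs_cont: "\<forall>x. pmf q x > 0 \<longrightarrow> pmf p x > 0"
    and pos: "0 < marg q F b zt"
  shows "(\<Sum>x\<in>UNIV. pmf q x * pmf (F b x) zt * fwd_post F K a b x zt zs) / marg q F b zt
     = rev_cond p F K a b zt zs * ratio_exp p q F a zs
       / (\<Sum>zs'\<in>UNIV. rev_cond p F K a b zt zs' * ratio_exp p q F a zs')"
proof -
  have reweighted: "rev_cond p F K a b zt z * ratio_exp p q F a z
      = pmf (K a b z) zt * marg q F a z / marg p F b zt" for z
    using marg_mult_ratio_exp[OF abs_cont, of F a z] unfolding rev_cond_def
    by (simp add: field_simps)
  have "0 < marg p F b zt" using marg_pos_of_abs_cont[OF abs_cont pos] .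
  with pos show ?thesis
    unfolding sum_weighted_fwd_post[where F = F and K = K and a = a and b = b, OF markov]
      reweighted sum_divide_distrib[symmetric]
      marg_chapman_kolmogorov[where F = F and K = K and a = a and b = b, OF markov]
    by (simp add: field_simps)
qed

section \<open>The training objective\<close>

text \<open>The finiteness of the optimal values matters: in ereal, adding \<infinity> to both sides of a
  strict inequality destroys it.\<close>

lemma sum_minimiser_eq_componentwise_minimiser:
  fixes G :: "'j \<Rightarrow> 'a \<Rightarrow> ereal"
  assumes "finite A" and "j \<in> A"
    and opt_finite: "\<forall>k\<in>A. \<bar>G k (opt k)\<bar> \<noteq> \<infinity>"
    and opt_le: "\<forall>k\<in>A. \<forall>a. G k (opt k) \<le> G k a"
    and opt_unique: "\<forall>a. a \<noteq> opt j \<longrightarrow> G j (opt j) < G j a"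
    and minimal: "(\<Sum>k\<in>A. G k (\<phi> k)) \<le> (\<Sum>k\<in>A. G k (opt k))"
  shows "\<phi> j = opt j"
proof (rule ccontr)
  assume "\<phi> j \<noteq> opt j"
  have "(\<Sum>k\<in>A - {j}. G k (opt k)) = (\<Sum>k\<in>A - {j}. ereal (real_of_ereal (G k (opt k))))"
    using opt_finite by (intro sum.cong) (auto simp: ereal_real')
  then obtain r where r: "(\<Sum>k\<in>A - {j}. G k (opt k)) = ereal r" by simp
  have "(\<Sum>k\<in>A. G k (opt k)) = G j (opt j) + ereal r"
    using assms(1,2) r by (simp add: sum.remove)
  also have "\<dots> < G j (\<phi> j) + ereal r"
    using opt_unique \<open>\<phi> j \<noteq> opt j\<close> opt_finite \<open>j \<in> A\<close>
    by (cases "G j (opt j)"; cases "G j (\<phi> j)") auto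
  also have "\<dots> \<le> G j (\<phi> j) + (\<Sum>k\<in>A - {j}. G k (\<phi> k))"
    unfolding r[symmetric] using opt_le by (intro add_left_mono sum_mono) auto
  also have "\<dots> = (\<Sum>k\<in>A. G k (\<phi> k))"
    using assms(1,2) by (simp add: sum.remove)
  finally show False using minimal by simp
qed

lemma objective_eq_sum_weighted_KL:
  "objective q F K s t T \<psi> = (\<Sum>(i, z)\<in>{1..T} \<times> UNIV.
     weighted_KL (\<lambda>x. pmf q x * pmf (F (t i) x) z) (\<lambda>x. fwd_post F K (s i) (t i) x z) (\<psi> i z))"
proof -
  have "objective q F K s t T \<psi> = (\<Sum>i\<in>{1..T}. \<Sum>x\<in>UNIV. \<Sum>z\<in>UNIV.
      ereal (pmf q x * pmf (F (t i) x) z) * KL (fwd_post F K (s i) (t i) x z) (\<psi> i z))"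
    unfolding objective_def by (rule sum.swap)
  also have "\<dots> = (\<Sum>i\<in>{1..T}. \<Sum>z\<in>UNIV. \<Sum>x\<in>UNIV.
      ereal (pmf q x * pmf (F (t i) x) z) * KL (fwd_post F K (s i) (t i) x z) (\<psi> i z))"
    by (intro sum.cong refl) (rule sum.swap)
  finally show ?thesis
    unfolding weighted_KL_def sum.cartesian_product[symmetric] by simp
qed

lemma objective_minimiser_eq_mixture:
  assumes markov: "\<forall>i\<in>{1..T}. \<forall>x z'. pmf (F (t i) x) z' =
                    (\<Sum>z\<in>UNIV. pmf (F (s i) x) z * pmf (K (s i) (t i) z) z')"
    and minimizer: "\<forall>\<psi>. objective q F K s t T \<psi>star \<le> objective q F K s t T \<psi>"
    and i: "i \<in> {1..T}" and pos: "0 < marg q F (t i) zt"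
  shows "\<psi>star i zt = mixture (\<lambda>x. pmf q x * pmf (F (t i) x) zt) (\<lambda>x. fwd_post F K (s i) (t i) x zt)"
proof -
  define w where "w = (\<lambda>(j, z) x. pmf q x * pmf (F (t j) x) z)"
  define P where "P = (\<lambda>(j, z) x. fwd_post F K (s j) (t j) x z)"
  let ?A = "{1..T} \<times> (UNIV :: 'v set)"
  have w0: "\<forall>x. 0 \<le> w k x" for k by (simp add: w_def split: prod.split)
  have P0: "\<forall>x z. 0 \<le> P k x z" for k by (simp add: P_def fwd_post_def split: prod.split)
  have P1: "\<forall>x. 0 < w k x \<longrightarrow> sum (P k x) UNIV = 1" if "k \<in> ?A" for k
    using that markov by (auto simp: w_def P_def zero_less_mult_iff intro!: fwd_post_sum_eq_1)
  have W: "0 < sum (w (i, zt)) UNIV" using pos by (simp add: w_def marg_def)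
  have minimal: "(\<Sum>k\<in>?A. weighted_KL (w k) (P k) (case_prod \<psi>star k))
      \<le> (\<Sum>k\<in>?A. weighted_KL (w k) (P k) (mixture (w k) (P k)))"
    using minimizer[rule_format, of "\<lambda>j z. mixture (w (j, z)) (P (j, z))"]
    by (simp add: objective_eq_sum_weighted_KL w_def P_def case_prod_beta)
  have "case_prod \<psi>star (i, zt) = mixture (w (i, zt)) (P (i, zt))"
    using i weighted_KL_mixture_finite[OF w0 P0 P1] weighted_KL_mixture_le[OF w0 P0 P1]
      weighted_KL_mixture_less[OF w0 P0 P1 W] minimal
    by (intro sum_minimiser_eq_componentwise_minimiser[where G = "\<lambda>k. weighted_KL (w k) (P k)"])
      auto
  then show ?thesis by (simp add: w_def P_def)
qed

theorem theorem1:
  fixes p q :: "'x::finite pmf"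
    and F :: "real \<Rightarrow> 'x \<Rightarrow> 'v::finite pmf"
    and K :: "real \<Rightarrow> real \<Rightarrow> 'v \<Rightarrow> 'v pmf"
    and t s :: "nat \<Rightarrow> real" and T :: nat
    and \<psi>star :: "nat \<Rightarrow> 'v \<Rightarrow> 'v pmf"
  assumes t0: "t 0 = 0"
    and t_mono: "strict_mono t"
    and st: "\<forall>i\<in>{1..T}. s i < t i"
    and markov: "\<forall>i\<in>{1..T}. \<forall>x z'. pmf (F (t i) x) z' =
                    (\<Sum>z\<in>UNIV. pmf (F (s i) x) z * pmf (K (s i) (t i) z) z')"
    and ratio_ok: "\<forall>x. pmf q x > 0 \<longrightarrow> pmf p x > 0"
    and minimizer: "\<forall>\<psi>. objective q F K s t T \<psi>star \<le> objective q F K s t T \<psi>"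
  shows "\<forall>i\<in>{1..T}. \<forall>zt. marg q F (t i) zt > 0 \<longrightarrow> (\<forall>zs.
           pmf (\<psi>star i zt) zs =
             rev_cond p F K (s i) (t i) zt zs * ratio_exp p q F (s i) zs
             / (\<Sum>zs'\<in>UNIV. rev_cond p F K (s i) (t i) zt zs' * ratio_exp p q F (s i) zs'))"
proof (intro ballI allI impI)
  fix i zt zs
  assume i: "i \<in> {1..T}" and pos: "0 < marg q F (t i) zt"
  have "pmf (\<psi>star i zt) zs
      = (\<Sum>x\<in>UNIV. pmf q x * pmf (F (t i) x) zt * fwd_post F K (s i) (t i) x zt zs) / marg q F (t i) zt"
    unfolding objective_minimiser_eq_mixture[OF markov minimizer i pos]
    using markov i pos by (intro pmf_mixture_fwd_post) auto
  also have "\<dots> = rev_cond p F K (s i) (t i) zt zs * ratio_exp p q F (s i) zs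
      / (\<Sum>zs'\<in>UNIV. rev_cond p F K (s i) (t i) zt zs' * ratio_exp p q F (s i) zs')"
    using markov i ratio_ok pos by (intro mixture_fwd_post_eq_reweighted_rev_cond) auto
  finally show "pmf (\<psi>star i zt) zs = rev_cond p F K (s i) (t i) zt zs * ratio_exp p q F (s i) zs
      / (\<Sum>zs'\<in>UNIV. rev_cond p F K (s i) (t i) zt zs' * ratio_exp p q F (s i) zs')" .
qed

end
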